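(* Let $a\in\mathbb{C}_p$, $a\neq0$, $A=|a|_p$, and $f(x)=\frac{ax}{x^2+a}$, whose unique fixed point is $x_0=0$ (with $f'(0)=1$). Then: 1.1) The maximal Siegel disk of $f$ centered at $0$ is $SI(0)=U_{\sqrt A}(0)$. 1.2) $\mathcal P\subset S_{\sqrt A}(0)$. 2) If $r>\sqrt A$ and $x\in S_r(0)$, then $f^n(x)\in S_{A/r}(0)$ for all $n\ge1$. 3) Let $x\in S_{\sqrt A}(0)\setminus\mathcal P$ and $A^*(x)=|f(x)|_p$. 3.1) If $A^*(x)=\sqrt A$ then $f(x)\in S_{\sqrt A}(0)$. 3.2) If $A^*(x)>\sqrt A$ then $f^n(x)\in S_{A/A^*(x)}(0)$ for all $n\ge 2$.
   Context: For $c\in\mathbb{C}_p$, $r>0$: $U_r(c)=\{x:|x-c|_p<r\}$, $V_r(c)=\{x:|x-c|_p\le r\}$, $S_r(c)=\{x:|x-c|_p=r\}$. $f$ is defined on $\mathbb{C}_p\setminus\{\pm\sqrt{-a}\}$ and $\mathcal P=\{x\in\mathbb{C}_p:\ \exists n\in\mathbb{N}\cup\{0\},\ f^n(x)\in\{\sqrt{-a},-\sqrt{-a}\}\}$. A sphere $S_\rho(x_0)$ is invariant if $x\in S_\rho(x_0)$ implies $f^n(x)\in S_\rho(x_0)$ for all $n\ge1$. A ball $U_r(x_0)$ is a Siegel disk if every sphere $S_\rho(x_0)$ with $\rho<r$ is invariant; the maximal Siegel disk $SI(x_0)$ is the union of all Siegel disks centered at $x_0$. *)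

theory Defs
  imports Complex_Main "HOL-Computational_Algebra.Polynomial" "HOL-Computational_Algebra.Primes"
begin

text \<open>Abstract model of C_p: a field of characteristic 0 with an absolute value nv
  that is non-archimedean, satisfies nv p = 1/p, is complete and algebraically closed.\<close>

definition Cp_like :: "('a::field_char_0 \<Rightarrow> real) \<Rightarrow> nat \<Rightarrow> bool" where
  "Cp_like nv p \<longleftrightarrow>
     prime p \<and>
     (\<forall>x. nv x \<ge> 0) \<and> (\<forall>x. nv x = 0 \<longleftrightarrow> x = 0) \<and>
     (\<forall>x y. nv (x * y) = nv x * nv y) \<and>
     (\<forall>x y. nv (x + y) \<le> max (nv x) (nv y)) \<and>
     nv (of_nat p) = 1 / real p \<and>
     (\<forall>X :: nat \<Rightarrow> 'a. (\<forall>e>0. \<exists>N. \<forall>m\<ge>N. \<forall>n\<ge>N. nv (X m - X n) < e)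
        \<longrightarrow> (\<exists>L. (\<lambda>n. nv (X n - L)) \<longlonglongrightarrow> 0)) \<and>
     (\<forall>q :: 'a poly. degree q \<ge> 1 \<longrightarrow> (\<exists>x. poly q x = 0))"

definition Uball :: "('a::field \<Rightarrow> real) \<Rightarrow> real \<Rightarrow> 'a \<Rightarrow> 'a set" where
  "Uball nv r c = {x. nv (x - c) < r}"

definition Vball :: "('a::field \<Rightarrow> real) \<Rightarrow> real \<Rightarrow> 'a \<Rightarrow> 'a set" where
  "Vball nv r c = {x. nv (x - c) \<le> r}"

definition Sph :: "('a::field \<Rightarrow> real) \<Rightarrow> real \<Rightarrow> 'a \<Rightarrow> 'a set" where
  "Sph nv r c = {x. nv (x - c) = r}"

text \<open>The map f(x) = a x / (x^2 + a); at the two poles Isabelle's convention gives 0.\<close>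
definition fmap :: "'a::field \<Rightarrow> 'a \<Rightarrow> 'a" where
  "fmap a x = a * x / (x ^ 2 + a)"

definition invariant_sphere :: "('a \<Rightarrow> 'a) \<Rightarrow> ('a::field \<Rightarrow> real) \<Rightarrow> real \<Rightarrow> 'a \<Rightarrow> bool" where
  "invariant_sphere f nv \<rho> c \<longleftrightarrow>
     (\<forall>x \<in> Sph nv \<rho> c. \<forall>n\<ge>1. (f ^^ n) x \<in> Sph nv \<rho> c)"

definition siegel_disk :: "('a \<Rightarrow> 'a) \<Rightarrow> ('a::field \<Rightarrow> real) \<Rightarrow> real \<Rightarrow> 'a \<Rightarrow> bool" where
  "siegel_disk f nv r c \<longleftrightarrow> 0 < r \<and> (\<forall>\<rho>. 0 < \<rho> \<and> \<rho> < r \<longrightarrow> invariant_sphere f nv \<rho> c)"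

definition max_siegel :: "('a \<Rightarrow> 'a) \<Rightarrow> ('a::field \<Rightarrow> real) \<Rightarrow> 'a \<Rightarrow> 'a set" where
  "max_siegel f nv c = \<Union>{Uball nv r c | r. siegel_disk f nv r c}"

text \<open>Preimages of the poles: x such that some iterate f^n(x) is a square root of -a.\<close>
definition Pset :: "'a::field \<Rightarrow> 'a set" where
  "Pset a = {x. \<exists>n. ((fmap a) ^^ n) x ^ 2 = - a}"

end

theory Submission
  imports Defs
begin

text \<open>Inside the disk of radius \<open>\<surd>A\<close> the denominator \<open>x\<^sup>2 + a\<close> has absolute value \<open>A\<close>,
  so \<open>|f x| = |x|\<close>; outside it the denominator has absolute value \<open>|x|\<^sup>2\<close>, so \<open>|f x| = A/|x|\<close>,
  which lies inside the disk. Hence every sphere of radius \<open>< \<surd>A\<close> is invariant, orbits starting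
  off the sphere \<open>S\<^sub>\<surd>\<^sub>A(0)\<close> never reach it (so all preimages of the poles lie on it), and
  the sphere \<open>S\<^sub>\<surd>\<^sub>A(0)\<close> itself is not invariant because a pole on it is sent to \<open>0\<close>.\<close>

lemma divide_less_sqrt:
  fixes A r :: real
  assumes "0 < A" and "sqrt A < r"
  shows "A / r < sqrt A"
proof -
  have "sqrt A * sqrt A < sqrt A * r"
    using assms by (intro mult_strict_left_mono) auto
  moreover have "0 < r"
    using assms real_sqrt_gt_zero by (meson less_trans)
  ultimately show ?thesis
    using assms(1) by (simp add: divide_less_eq)
qed

locale nonarch_abs =
  fixes nv :: "'a::field \<Rightarrow> real"
  assumes nv_nonneg: "nv x \<ge> 0"
    and nv_eq_0_iff: "nv x = 0 \<longleftrightarrow> x = 0"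
    and nv_mult: "nv (x * y) = nv x * nv y"
    and nv_add_le_max: "nv (x + y) \<le> max (nv x) (nv y)"
begin

lemma nv_zero [simp]: "nv 0 = 0"
  by (simp add: nv_eq_0_iff)

lemma nv_pos_iff: "nv x > 0 \<longleftrightarrow> x \<noteq> 0"
  using nv_nonneg[of x] nv_eq_0_iff[of x] by linarith

lemma nv_one: "nv 1 = 1"
  using nv_mult[of 1 1] nv_pos_iff[of 1] by simp

lemma nv_minus: "nv (- x) = nv x"
proof -
  have "nv (-1) * nv (-1) = 1"
    using nv_mult[of "-1" "-1"] nv_one by simp
  then have "nv (-1) = 1"
    using nv_nonneg[of "-1"] by (metis abs_of_nonneg real_sqrt_abs2 real_sqrt_mult_self mult_cancel_left1)
  then show ?thesis
    using nv_mult[of "-1" x] by simp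
qed

lemma nv_divide: "nv (x / y) = nv x / nv y"
proof (cases "y = 0")
  case False
  then have "nv (x / y) * nv y = nv x"
    using nv_mult[of "x / y" y] by simp
  with False show ?thesis
    using nv_pos_iff[of y] by (simp add: field_simps)
qed simp

lemma nv_power2: "nv (x ^ 2) = nv x ^ 2"
  using nv_mult[of x x] by (simp add: power2_eq_square)

lemma nv_add_eq_right:
  assumes "nv x < nv y"
  shows "nv (x + y) = nv y"
proof -
  have "nv y \<le> max (nv (x + y)) (nv (- x))"
    using nv_add_le_max[of "x + y" "- x"] by simp
  with assms nv_add_le_max[of x y] show ?thesis
    by (auto simp: nv_minus)
qed

lemma nv_eq_sqrt_if_power2_eq_minus:
  assumes "x ^ 2 = - a"
  shows "nv x = sqrt (nv a)"
  using nv_power2[of x] nv_minus[of a] nv_nonneg[of x] assms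
  by (metis real_sqrt_unique)

lemma nv_fmap_inside:
  assumes "nv x < sqrt (nv a)"
  shows "nv (fmap a x) = nv x"
proof -
  have "nv x ^ 2 < sqrt (nv a) ^ 2"
    using assms nv_nonneg[of x] by (intro power_strict_mono) auto
  then have "nv x ^ 2 < nv a"
    using nv_nonneg[of a] by simp
  then have denom: "nv (x ^ 2 + a) = nv a"
    by (simp add: nv_add_eq_right nv_power2)
  have "a \<noteq> 0"
    using assms nv_nonneg[of x] nv_eq_0_iff[of a] by auto
  then show ?thesis
    using denom nv_pos_iff[of a] by (simp add: fmap_def nv_divide nv_mult)
qed

lemma nv_fmap_outside:
  assumes "nv x > sqrt (nv a)"
  shows "nv (fmap a x) = nv a / nv x"
proof -
  have x_pos: "nv x > 0"
    using assms real_sqrt_ge_zero[OF nv_nonneg[of a]] by linarith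
  have "sqrt (nv a) ^ 2 < nv x ^ 2"
    using assms nv_nonneg[of a] by (intro power_strict_mono) auto
  then have "nv a < nv x ^ 2"
    using nv_nonneg[of a] by simp
  then have "nv (x ^ 2 + a) = nv x ^ 2"
    using nv_add_eq_right[of a "x ^ 2"] by (simp add: nv_power2 add.commute)
  then show ?thesis
    using x_pos by (simp add: fmap_def nv_divide nv_mult power2_eq_square)
qed

lemma nv_funpow_fmap_inside:
  assumes "nv x < sqrt (nv a)"
  shows "nv ((fmap a ^^ n) x) = nv x"
  by (induction n) (use assms nv_fmap_inside in auto)

lemma nv_funpow_fmap_outside:
  assumes "a \<noteq> 0" and "nv x > sqrt (nv a)" and "n \<ge> 1"
  shows "nv ((fmap a ^^ n) x) = nv a / nv x"
proof -
  obtain m where n: "n = Suc m"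
    using assms(3) by (cases n) auto
  have "nv (fmap a x) < sqrt (nv a)"
    using nv_fmap_outside[OF assms(2)] divide_less_sqrt assms(1,2) nv_pos_iff by simp
  then show ?thesis
    using nv_funpow_fmap_inside[of "fmap a x" a m] nv_fmap_outside[OF assms(2)]
    by (simp add: n funpow_Suc_right del: funpow.simps)
qed

lemma nv_funpow_fmap_after_outside:
  assumes "a \<noteq> 0" and "nv (fmap a x) > sqrt (nv a)" and "n \<ge> 2"
  shows "nv ((fmap a ^^ n) x) = nv a / nv (fmap a x)"
proof -
  obtain m where "n = Suc m" and "m \<ge> 1"
    using assms(3) by (cases n) auto
  then show ?thesis
    using nv_funpow_fmap_outside[OF assms(1,2), of m]
    by (simp add: funpow_Suc_right del: funpow.simps)
qed

lemma nv_funpow_fmap_ne_sqrt: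
  assumes "a \<noteq> 0" and "nv x \<noteq> sqrt (nv a)"
  shows "nv ((fmap a ^^ n) x) \<noteq> sqrt (nv a)"
proof (cases "nv x < sqrt (nv a)")
  case True
  then show ?thesis
    using nv_funpow_fmap_inside by simp
next
  case False
  with assms have outside: "nv x > sqrt (nv a)"
    by simp
  show ?thesis
  proof (cases "n = 0")
    case False
    have "nv a / nv x < sqrt (nv a)"
      using divide_less_sqrt assms(1) outside nv_pos_iff by blast
    with False show ?thesis
      using nv_funpow_fmap_outside[OF assms(1) outside] by simp
  qed (use assms in simp)
qed

lemma Pset_subset_Sph:
  assumes "a \<noteq> 0"
  shows "Pset a \<subseteq> Sph nv (sqrt (nv a)) 0"
proof
  fix x
  assume "x \<in> Pset a"
  then obtain n where "(fmap a ^^ n) x ^ 2 = - a"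
    unfolding Pset_def by blast
  then have "nv ((fmap a ^^ n) x) = sqrt (nv a)"
    by (rule nv_eq_sqrt_if_power2_eq_minus)
  then show "x \<in> Sph nv (sqrt (nv a)) 0"
    using nv_funpow_fmap_ne_sqrt[OF assms] unfolding Sph_def by fastforce
qed

lemma siegel_disk_fmap_sqrt:
  assumes "a \<noteq> 0"
  shows "siegel_disk (fmap a) nv (sqrt (nv a)) 0"
  using assms nv_pos_iff[of a] nv_funpow_fmap_inside
  by (auto simp: siegel_disk_def invariant_sphere_def Sph_def)

text \<open>The pole \<open>y\<close> leaves the sphere only because HOL's division by zero sends it to \<open>0\<close>.\<close>
lemma not_invariant_sphere_fmap_sqrt:
  assumes "a \<noteq> 0" and "y ^ 2 = - a"
  shows "\<not> invariant_sphere (fmap a) nv (sqrt (nv a)) 0"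
proof
  assume "invariant_sphere (fmap a) nv (sqrt (nv a)) 0"
  moreover have "y \<in> Sph nv (sqrt (nv a)) 0"
    using nv_eq_sqrt_if_power2_eq_minus[OF assms(2)] by (simp add: Sph_def)
  ultimately have "(fmap a ^^ 1) y \<in> Sph nv (sqrt (nv a)) 0"
    unfolding invariant_sphere_def by blast
  moreover have "fmap a y = 0"
    using assms(2) by (simp add: fmap_def)
  ultimately show False
    using assms(1) nv_pos_iff[of a] by (simp add: Sph_def)
qed

lemma max_siegel_fmap:
  assumes "a \<noteq> 0" and "y ^ 2 = - a"
  shows "max_siegel (fmap a) nv 0 = Uball nv (sqrt (nv a)) 0"
proof -
  have radius_le: "r \<le> sqrt (nv a)" if "siegel_disk (fmap a) nv r 0" for r
  proof (rule ccontr)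
    assume "\<not> r \<le> sqrt (nv a)"
    then have "invariant_sphere (fmap a) nv (sqrt (nv a)) 0"
      using that assms(1) nv_pos_iff[of a] unfolding siegel_disk_def by simp
    with not_invariant_sphere_fmap_sqrt[OF assms] show False ..
  qed
  have "Uball nv r 0 \<subseteq> Uball nv (sqrt (nv a)) 0" if "siegel_disk (fmap a) nv r 0" for r
    using radius_le[OF that] by (auto simp: Uball_def)
  then show ?thesis
    using siegel_disk_fmap_sqrt[OF assms(1)] unfolding max_siegel_def by blast
qed

end

lemma Cp_like_nonarch_abs:
  assumes "Cp_like nv p"
  shows "nonarch_abs nv"
  using assms unfolding Cp_like_def nonarch_abs_def by auto

lemma Cp_like_square_root:
  fixes nv :: "'a::field_char_0 \<Rightarrow> real"
  assumes "Cp_like nv p"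
  obtains y :: 'a where "y ^ 2 = c"
proof -
  have "degree [:- c, 0, 1:] \<ge> 1"
    by simp
  then obtain y where "poly [:- c, 0, 1:] y = 0"
    using assms unfolding Cp_like_def by blast
  then have "y ^ 2 = c"
    by (simp add: power2_eq_square algebra_simps)
  then show ?thesis
    by (rule that)
qed

theorem theorem2p4:
  fixes nv :: "'a::field_char_0 \<Rightarrow> real" and p :: nat and a :: 'a
  assumes "Cp_like nv p" and "a \<noteq> 0"
  defines "A \<equiv> nv a"
  shows "max_siegel (fmap a) nv 0 = Uball nv (sqrt A) 0
    \<and> Pset a \<subseteq> Sph nv (sqrt A) 0
    \<and> (\<forall>r x. r > sqrt A \<longrightarrow> x \<in> Sph nv r 0 \<longrightarrow>
           (\<forall>n\<ge>1. ((fmap a) ^^ n) x \<in> Sph nv (A / r) 0))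
    \<and> (\<forall>x \<in> Sph nv (sqrt A) 0 - Pset a.
         (nv (fmap a x) = sqrt A \<longrightarrow> fmap a x \<in> Sph nv (sqrt A) 0)
       \<and> (nv (fmap a x) > sqrt A \<longrightarrow>
           (\<forall>n\<ge>2. ((fmap a) ^^ n) x \<in> Sph nv (A / nv (fmap a x)) 0)))"
proof -
  interpret nonarch_abs nv
    using assms(1) by (rule Cp_like_nonarch_abs)
  obtain y where y: "y ^ 2 = - a"
    using Cp_like_square_root[OF assms(1)] .
  show ?thesis
    using max_siegel_fmap[OF assms(2) y] Pset_subset_Sph[OF assms(2)]
      nv_funpow_fmap_outside[OF assms(2)] nv_funpow_fmap_after_outside[OF assms(2)]
    by (auto simp: A_def Sph_def)
qed

end
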